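(* Let $\varpi$ be a minuscule fundamental weight, $\bar\phi\in W/W_{P_\varpi}$ and let $\phi\in W$ be the smallest (minimal length) element of the class $\bar\phi$. Let $\phi=s_{\gamma_1}\cdots s_{\gamma_n}$ be a reduced expression with $\gamma_k$ simple roots, set $\beta_k=i(\gamma_k)$ and $\alpha_1=\beta_1$, $\alpha_k=s_{\beta_1}\cdots s_{\beta_{k-1}}(\beta_k)$ for $k\in[2,n]$. Then for all $i,j\in[1,n]$ we have $\langle\alpha_i^\vee,\alpha_j\rangle\ge 0$.
   Context: $G$ is a semisimple algebraic group with maximal torus $T$, Borel subgroup $B\supset T$, simple roots $S$, Weyl group $W$ with longest element $w_0$. For a root $\alpha$, $s_\alpha$ is the reflection and $\alpha^\vee$ the coroot. The Weyl involution $i$ sends a simple root $\beta$ to $-w_0(\beta)$ (and a fundamental weight $\varpi$ to $-w_0(\varpi)$). A fundamental weight $\varpi$ is minuscule if $\langle\alpha^\vee,\varpi\rangle\le1$ for all positive roots $\alpha$; $P_\varpi\supseteq B$ is the associated maximal parabolic subgroup and $W_{P_\varpi}$ its Weyl group. *)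

theory Defs
  imports "HOL-Analysis.Analysis"
begin

text \<open>Root-system combinatorics of a semisimple group, realised in a real Euclidean
space 'a (the real span of the character lattice of T), with the Weyl-invariant inner product.\<close>

definition refl :: "'a::euclidean_space \<Rightarrow> 'a \<Rightarrow> 'a" where
  "refl a x = x - (2 * (x \<bullet> a) / (a \<bullet> a)) *\<^sub>R a"

text \<open>copair a x is the pairing of the coroot a^vee with x.\<close>
definition copair :: "'a::euclidean_space \<Rightarrow> 'a \<Rightarrow> real" where
  "copair a x = 2 * (a \<bullet> x) / (a \<bullet> a)"

text \<open>Reduced crystallographic root system spanning the space (semisimple case).\<close>
definition root_system :: "'a::euclidean_space set \<Rightarrow> bool" where
  "root_system R \<longleftrightarrow> finite R \<and> 0 \<notin> R \<and> span R = UNIV \<and>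
     (\<forall>a\<in>R. \<forall>b\<in>R. refl a b \<in> R \<and> copair a b \<in> \<int>) \<and>
     (\<forall>a\<in>R. \<forall>c::real. c *\<^sub>R a \<in> R \<longrightarrow> c = 1 \<or> c = -1)"

definition is_base :: "'a::euclidean_space set \<Rightarrow> 'a set \<Rightarrow> bool" where
  "is_base R S \<longleftrightarrow> S \<subseteq> R \<and> independent S \<and>
     (\<forall>a\<in>R. \<exists>c. (\<forall>s\<in>S. c s \<in> \<int>) \<and> ((\<forall>s\<in>S. c s \<ge> 0) \<or> (\<forall>s\<in>S. c s \<le> 0)) \<and>
        a = (\<Sum>s\<in>S. c s *\<^sub>R s))"

definition pos_roots :: "'a::euclidean_space set \<Rightarrow> 'a set \<Rightarrow> 'a set" where
  "pos_roots R S = {a\<in>R. \<exists>c. (\<forall>s\<in>S. c s \<in> \<int> \<and> c s \<ge> 0) \<and> a = (\<Sum>s\<in>S. c s *\<^sub>R s)}"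

definition word_prod :: "'a::euclidean_space list \<Rightarrow> 'a \<Rightarrow> 'a" where
  "word_prod gs = foldr (\<lambda>g f. refl g \<circ> f) gs id"

definition weyl :: "'a::euclidean_space set \<Rightarrow> ('a \<Rightarrow> 'a) set" where
  "weyl S = word_prod ` {gs. set gs \<subseteq> S}"

definition wlen :: "'a::euclidean_space set \<Rightarrow> ('a \<Rightarrow> 'a) \<Rightarrow> nat" where
  "wlen S w = (LEAST n. \<exists>gs. set gs \<subseteq> S \<and> length gs = n \<and> word_prod gs = w)"

definition reduced_expr :: "'a::euclidean_space set \<Rightarrow> 'a list \<Rightarrow> ('a \<Rightarrow> 'a) \<Rightarrow> bool" where
  "reduced_expr S gs w \<longleftrightarrow> set gs \<subseteq> S \<and> word_prod gs = w \<and> length gs = wlen S w"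

definition longest :: "'a::euclidean_space set \<Rightarrow> 'a \<Rightarrow> 'a" where
  "longest S = (THE w. w \<in> weyl S \<and> (\<forall>v\<in>weyl S. wlen S v \<le> wlen S w))"

definition weyl_inv :: "'a::euclidean_space set \<Rightarrow> 'a \<Rightarrow> 'a" where
  "weyl_inv S b = - longest S b"

definition fund_weight :: "'a::euclidean_space set \<Rightarrow> 'a \<Rightarrow> 'a \<Rightarrow> bool" where
  "fund_weight S d w \<longleftrightarrow> (\<forall>a\<in>S. copair a w = (if a = d then 1 else 0))"

definition minuscule :: "'a::euclidean_space set \<Rightarrow> 'a set \<Rightarrow> 'a \<Rightarrow> bool" where
  "minuscule R S w \<longleftrightarrow> (\<forall>a\<in>pos_roots R S. copair a w \<le> 1)"

end

theory Submission
  imports Defs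
begin

text \<open>
  Write A_k = s_{gamma_1} ... s_{gamma_{k-1}}(gamma_k) for the inversion roots of the reduced word.
  Conjugating by w_0 shows alpha_k = -w_0(A_k), so the alpha_k pair with each other as the A_k do.
  Reading the reversed (still reduced) word shows A_k = -phi(C_k) for a positive root C_k, so the
  A_k pair as the C_k do. Minimality of phi in its coset means that phi keeps the simple roots
  other than d positive; since phi turns C_k negative, C_k must involve d, so its coroot pairs with
  varpi to a positive integer, i.e. to at least 1. Finally, if two positive roots y, z whose
  coroots pair with varpi to at least 1 had a negative pairing, then s_y(z) would be a positive root
  whose coroot pairs with varpi to at least 2, which is impossible for minuscule varpi.
\<close>

section \<open>Reflections and words in reflections\<close>

lemma refl_eq_copair: "refl a x = x - copair a x *\<^sub>R a"
  by (simp add: refl_def copair_def inner_commute)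

lemma orthogonal_transformation_refl: "orthogonal_transformation (refl a)"
proof -
  have "linear (refl a)"
    by (rule linearI) (simp_all add: refl_def inner_add_left add_divide_distrib algebra_simps)
  moreover have "refl a x \<bullet> refl a y = x \<bullet> y" for x y
    by (cases "a = 0") (simp_all add: refl_def inner_diff_left inner_diff_right inner_commute field_simps)
  ultimately show ?thesis
    unfolding orthogonal_transformation_def by blast
qed

lemma refl_refl [simp]: "refl a (refl a x) = x"
  by (cases "a = 0") (simp_all add: refl_def inner_diff_left field_simps)

lemma refl_self [simp]: "a \<noteq> 0 \<Longrightarrow> refl a a = - a"
  by (simp add: refl_def scaleR_2)

lemma refl_uminus [simp]: "refl (- a) = refl a"
  by (rule ext) (simp add: refl_def)

lemma orthogonal_transformation_refl_commute:
  "orthogonal_transformation w \<Longrightarrow> w (refl a x) = refl (w a) (w x)"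
  unfolding orthogonal_transformation_def refl_def by (simp add: linear_diff linear_scale)

lemma copair_uminus_orthogonal_transformation:
  "orthogonal_transformation w \<Longrightarrow> copair (- w x) (- w y) = copair x y"
  unfolding orthogonal_transformation_def copair_def by simp

lemma copair_refl: "copair (refl a b) w = copair b w - copair a w * copair b a"
proof -
  have "refl a b \<bullet> refl a b = b \<bullet> b"
    using orthogonal_transformation_refl unfolding orthogonal_transformation_def by blast
  moreover have "refl a b \<bullet> w = b \<bullet> w - copair a b * (a \<bullet> w)"
    by (simp add: refl_eq_copair inner_diff_left)
  ultimately have "copair (refl a b) w = 2 * (b \<bullet> w - copair a b * (a \<bullet> w)) / (b \<bullet> b)"
    by (simp add: copair_def)
  then show ?thesis
    by (cases "a = 0"; cases "b = 0") (simp_all add: copair_def inner_commute field_simps)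
qed

lemma word_prod_Nil [simp]: "word_prod [] = id"
  by (simp add: word_prod_def)

lemma word_prod_Cons [simp]: "word_prod (g # gs) = refl g \<circ> word_prod gs"
  by (simp add: word_prod_def)

lemma word_prod_append: "word_prod (xs @ ys) = word_prod xs \<circ> word_prod ys"
  by (induction xs) auto

lemma orthogonal_transformation_word_prod: "orthogonal_transformation (word_prod gs)"
proof (induction gs)
  case Nil
  then show ?case by (simp add: id_def)
next
  case (Cons g gs)
  then show ?case
    unfolding word_prod_Cons by (rule orthogonal_transformation_compose[OF orthogonal_transformation_refl])
qed

lemma word_prod_rev_cancel [simp]: "word_prod (rev gs) (word_prod gs x) = x"
  by (induction gs arbitrary: x) (auto simp: word_prod_append)

lemma word_prod_cancel_rev [simp]: "word_prod gs (word_prod (rev gs) x) = x"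
  using word_prod_rev_cancel[of "rev gs"] by simp

lemma word_prod_map_conj:
  assumes "orthogonal_transformation w"
  shows "word_prod (map (\<lambda>g. - w g) gs) (w y) = w (word_prod gs y)"
  by (induction gs arbitrary: y) (auto simp: orthogonal_transformation_refl_commute[OF assms])

definition inversion_root :: "'a::euclidean_space list \<Rightarrow> nat \<Rightarrow> 'a" where
  "inversion_root gs k = word_prod (take k gs) (gs ! k)"

lemma inversion_root_map_orthogonal:
  assumes w: "orthogonal_transformation w" and k: "k < length gs"
  shows "inversion_root (map (\<lambda>g. - w g) gs) k = - w (inversion_root gs k)"
proof -
  have "map (\<lambda>g. - w g) gs ! k = w (- gs ! k)"
    using k linear_neg[OF orthogonal_transformation_linear[OF w]] by simp
  then have "inversion_root (map (\<lambda>g. - w g) gs) k = w (word_prod (take k gs) (- gs ! k))"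
    unfolding inversion_root_def by (simp add: take_map word_prod_map_conj[OF w])
  then show ?thesis
    unfolding inversion_root_def
    by (simp add: linear_neg orthogonal_transformation_linear[OF w] orthogonal_transformation_linear[OF orthogonal_transformation_word_prod])
qed

lemma word_prod_inversion_root_rev:
  assumes k: "k < length gs" and nz: "gs ! k \<noteq> 0"
  shows "word_prod gs (inversion_root (rev gs) (length gs - Suc k)) = - inversion_root gs k"
proof -
  have "gs = take k gs @ gs ! k # drop (Suc k) gs"
    using k by (rule id_take_nth_drop)
  then have "word_prod gs = word_prod (take k gs) \<circ> refl (gs ! k) \<circ> word_prod (drop (Suc k) gs)"
    by (metis word_prod_append word_prod_Cons comp_assoc)
  moreover have "inversion_root (rev gs) (length gs - Suc k) = word_prod (rev (drop (Suc k) gs)) (gs ! k)"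
    using k by (simp add: inversion_root_def take_rev rev_nth)
  ultimately show ?thesis
    using nz linear_neg[OF orthogonal_transformation_linear[OF orthogonal_transformation_word_prod]]
    by (simp add: inversion_root_def)
qed

section \<open>Positive roots\<close>

locale based_root_system =
  fixes R S :: "'a::euclidean_space set"
  assumes root_system: "root_system R" and base: "is_base R S"
begin

lemma finite_roots: "finite R"
  and zero_not_root: "0 \<notin> R"
  and span_roots: "span R = UNIV"
  and refl_root: "a \<in> R \<Longrightarrow> b \<in> R \<Longrightarrow> refl a b \<in> R"
  and copair_root_Ints: "a \<in> R \<Longrightarrow> b \<in> R \<Longrightarrow> copair a b \<in> \<int>"
  and root_multiple: "a \<in> R \<Longrightarrow> c *\<^sub>R a \<in> R \<Longrightarrow> c = 1 \<or> c = -1"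
  using root_system unfolding root_system_def by auto

lemma simple_roots: "S \<subseteq> R"
  and independent_simple: "independent S"
  and root_expansion: "a \<in> R \<Longrightarrow> \<exists>c. (\<forall>s\<in>S. c s \<in> \<int>) \<and> ((\<forall>s\<in>S. c s \<ge> 0) \<or> (\<forall>s\<in>S. c s \<le> 0)) \<and>
     a = (\<Sum>s\<in>S. c s *\<^sub>R s)"
  using base unfolding is_base_def by auto

lemma root_nonzero: "a \<in> R \<Longrightarrow> a \<noteq> 0"
  using zero_not_root by blast

lemma simple_nonzero: "s \<in> S \<Longrightarrow> s \<noteq> 0"
  using simple_roots root_nonzero by blast

lemma finite_simple: "finite S"
  using simple_roots finite_roots finite_subset by blast

lemma uminus_root: "a \<in> R \<Longrightarrow> - a \<in> R"
  using refl_root[of a a] root_nonzero by simp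

lemma span_simple: "x \<in> span S"
proof -
  have "R \<subseteq> span S"
    using root_expansion by (fastforce intro: span_sum span_scale span_base)
  then show ?thesis
    using span_roots span_minimal[of R "span S"] by auto
qed

definition simple_coeff :: "'a \<Rightarrow> 'a \<Rightarrow> real" where
  "simple_coeff x s = representation S x s"

lemma simple_coeff_diff: "simple_coeff (x - y) s = simple_coeff x s - simple_coeff y s"
  unfolding simple_coeff_def using representation_diff[OF independent_simple span_simple span_simple] by simp

lemma simple_coeff_scaleR: "simple_coeff (c *\<^sub>R x) s = c * simple_coeff x s"
  unfolding simple_coeff_def using representation_scale[OF independent_simple span_simple] by simp

lemma simple_coeff_uminus: "simple_coeff (- x) s = - simple_coeff x s"
  unfolding simple_coeff_def using representation_neg[OF independent_simple span_simple] by simp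

lemma simple_coeff_sum: "simple_coeff (sum f I) s = (\<Sum>i\<in>I. simple_coeff (f i) s)"
  unfolding simple_coeff_def using representation_sum[OF independent_simple, of I f] span_simple by simp

lemma simple_coeff_simple: "t \<in> S \<Longrightarrow> simple_coeff t s = (if s = t then 1 else 0)"
  unfolding simple_coeff_def using representation_basis[OF independent_simple] by simp

lemma simple_coeff_expansion: "x = (\<Sum>s\<in>S. simple_coeff x s *\<^sub>R s)"
  unfolding simple_coeff_def using sum_representation_eq[OF independent_simple span_simple finite_simple] by simp

lemma simple_coeff_combination:
  assumes "s \<in> S"
  shows "simple_coeff (\<Sum>t\<in>S. c t *\<^sub>R t) s = c s"
proof -
  have "simple_coeff (\<Sum>t\<in>S. c t *\<^sub>R t) s = (\<Sum>t\<in>S. if t = s then c t else 0)"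
    by (auto simp: simple_coeff_sum simple_coeff_scaleR simple_coeff_simple intro: sum.cong)
  also have "\<dots> = c s"
    using assms finite_simple by simp
  finally show ?thesis .
qed

lemma eq_0_if_simple_coeff_eq_0: "(\<forall>s\<in>S. simple_coeff x s = 0) \<Longrightarrow> x = 0"
  using simple_coeff_expansion[of x] by simp

lemma simple_coeff_linear_image:
  assumes "linear f"
  shows "simple_coeff (f x) t = (\<Sum>s\<in>S. simple_coeff x s * simple_coeff (f s) t)"
proof -
  have "f x = (\<Sum>s\<in>S. simple_coeff x s *\<^sub>R f s)"
    by (subst simple_coeff_expansion) (simp add: linear_sum[OF assms] linear_scale[OF assms])
  then show ?thesis
    by (simp add: simple_coeff_sum simple_coeff_scaleR)
qed

lemma inner_simple_expansion: "x \<bullet> v = (\<Sum>s\<in>S. simple_coeff x s * (s \<bullet> v))"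
  by (subst simple_coeff_expansion) (simp add: inner_sum_left)

lemma root_simple_coeff:
  assumes "a \<in> R"
  shows "(\<forall>s\<in>S. simple_coeff a s \<in> \<int>) \<and> ((\<forall>s\<in>S. simple_coeff a s \<ge> 0) \<or> (\<forall>s\<in>S. simple_coeff a s \<le> 0))"
proof -
  obtain c where "\<forall>s\<in>S. c s \<in> \<int>" "(\<forall>s\<in>S. c s \<ge> 0) \<or> (\<forall>s\<in>S. c s \<le> 0)" "a = (\<Sum>s\<in>S. c s *\<^sub>R s)"
    using root_expansion[OF assms] by blast
  then show ?thesis
    using simple_coeff_combination by simp
qed

definition pos_root :: "'a \<Rightarrow> bool" where
  "pos_root x \<longleftrightarrow> x \<in> R \<and> (\<forall>s\<in>S. simple_coeff x s \<ge> 0)"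

lemma pos_roots_eq: "pos_roots R S = Collect pos_root"
proof (intro set_eqI iffI)
  fix x assume "x \<in> pos_roots R S"
  then show "x \<in> Collect pos_root"
    unfolding pos_roots_def pos_root_def using simple_coeff_combination by auto
next
  fix x assume "x \<in> Collect pos_root"
  then have "x \<in> R" "\<forall>s\<in>S. simple_coeff x s \<in> \<int> \<and> simple_coeff x s \<ge> 0"
    unfolding pos_root_def using root_simple_coeff by auto
  then show "x \<in> pos_roots R S"
    unfolding pos_roots_def using simple_coeff_expansion by blast
qed

lemma pos_root_or_uminus: "a \<in> R \<Longrightarrow> pos_root a \<or> pos_root (- a)"
  using root_simple_coeff[of a] uminus_root[of a] unfolding pos_root_def by (auto simp: simple_coeff_uminus)

lemma not_pos_root_uminus:
  assumes "pos_root a"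
  shows "\<not> pos_root (- a)"
proof
  assume "pos_root (- a)"
  with assms have "\<forall>s\<in>S. simple_coeff a s = 0"
    unfolding pos_root_def by (force simp: simple_coeff_uminus)
  then have "a = 0"
    by (rule eq_0_if_simple_coeff_eq_0)
  with assms show False
    unfolding pos_root_def using zero_not_root by blast
qed

lemma pos_root_simple: "s \<in> S \<Longrightarrow> pos_root s"
  unfolding pos_root_def using simple_roots by (auto simp: simple_coeff_simple)

lemma pos_root_refl_simple:
  assumes s: "s \<in> S" and x: "pos_root x" and ne: "x \<noteq> s"
  shows "pos_root (refl s x)"
proof -
  have xR: "x \<in> R" and yR: "refl s x \<in> R"
    using x s simple_roots refl_root unfolding pos_root_def by auto
  have same_coeff: "simple_coeff (refl s x) t = simple_coeff x t" if "t \<in> S" "t \<noteq> s" for t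
    using that s by (simp add: refl_eq_copair simple_coeff_diff simple_coeff_scaleR simple_coeff_simple)
  show ?thesis
  proof (cases "\<exists>t\<in>S. t \<noteq> s \<and> simple_coeff x t > 0")
    case True
    then obtain t where t: "t \<in> S" "t \<noteq> s" "simple_coeff x t > 0"
      by blast
    then have "simple_coeff (refl s x) t > 0"
      using same_coeff by simp
    then have "\<not> (\<forall>u\<in>S. simple_coeff (refl s x) u \<le> 0)"
      using t(1) by fastforce
    then show ?thesis
      using root_simple_coeff[OF yR] yR unfolding pos_root_def by blast
  next
    case False
    \<comment> \<open>then x is a positive multiple of s, which the reducedness of R forbids\<close>
    have zero: "simple_coeff x t = 0" if "t \<in> S" "t \<noteq> s" for t
    proof -
      have "\<not> simple_coeff x t > 0" "simple_coeff x t \<ge> 0"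
        using False x that unfolding pos_root_def by auto
      then show ?thesis
        by linarith
    qed
    have "x = (\<Sum>t\<in>S. if t = s then simple_coeff x s *\<^sub>R t else 0)"
      by (subst simple_coeff_expansion, rule sum.cong) (auto simp: zero)
    also have "\<dots> = simple_coeff x s *\<^sub>R s"
      using s finite_simple by simp
    finally have x_eq: "x = simple_coeff x s *\<^sub>R s" .
    then have "simple_coeff x s = 1 \<or> simple_coeff x s = -1"
      using root_multiple[of s "simple_coeff x s"] simple_roots s xR by auto
    moreover have "simple_coeff x s \<ge> 0"
      using x s unfolding pos_root_def by blast
    ultimately have "x = s"
      using x_eq by auto
    with ne show ?thesis ..
  qed
qed

lemma pos_root_linear_image:
  assumes f: "linear f" and fx: "f x \<in> R" and x: "pos_root x"
    and support: "\<forall>s\<in>S. simple_coeff x s \<noteq> 0 \<longrightarrow> pos_root (f s)"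
  shows "pos_root (f x)"
proof -
  have "simple_coeff x s * simple_coeff (f s) t \<ge> 0" if "s \<in> S" "t \<in> S" for s t
    using x support that unfolding pos_root_def by (cases "simple_coeff x s = 0") auto
  then have "simple_coeff (f x) t \<ge> 0" if "t \<in> S" for t
    using that by (subst simple_coeff_linear_image[OF f]) (simp add: sum_nonneg)
  then show ?thesis
    using fx unfolding pos_root_def by blast
qed

section \<open>Length in the Weyl group\<close>

lemma mem_weyl_iff: "w \<in> weyl S \<longleftrightarrow> (\<exists>gs. set gs \<subseteq> S \<and> w = word_prod gs)"
  unfolding weyl_def by blast

lemma word_prod_root: "set gs \<subseteq> S \<Longrightarrow> x \<in> R \<Longrightarrow> word_prod gs x \<in> R"
  using simple_roots by (induction gs) (auto intro!: refl_root)

lemma weyl_root: "w \<in> weyl S \<Longrightarrow> x \<in> R \<Longrightarrow> w x \<in> R"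
  unfolding mem_weyl_iff using word_prod_root by blast

lemma orthogonal_transformation_weyl: "w \<in> weyl S \<Longrightarrow> orthogonal_transformation w"
  unfolding mem_weyl_iff using orthogonal_transformation_word_prod by blast

lemma linear_weyl: "w \<in> weyl S \<Longrightarrow> linear w"
  using orthogonal_transformation_weyl orthogonal_transformation_linear by blast

lemma weyl_comp_refl:
  assumes "w \<in> weyl S" and "s \<in> S"
  shows "w \<circ> refl s \<in> weyl S"
proof -
  obtain gs where "set gs \<subseteq> S" "w = word_prod gs"
    using assms(1) mem_weyl_iff by blast
  then have "set (gs @ [s]) \<subseteq> S" "w \<circ> refl s = word_prod (gs @ [s])"
    using assms(2) by (auto simp: word_prod_append)
  then show ?thesis
    using mem_weyl_iff by blast
qed

lemma wlen_le: "set gs \<subseteq> S \<Longrightarrow> wlen S (word_prod gs) \<le> length gs"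
  unfolding wlen_def by (rule Least_le) blast

lemma reduced_expr_exists:
  assumes "w \<in> weyl S"
  shows "\<exists>gs. reduced_expr S gs w"
proof -
  have "\<exists>n gs. set gs \<subseteq> S \<and> length gs = n \<and> word_prod gs = w"
    using assms unfolding mem_weyl_iff by auto
  then have "\<exists>gs. set gs \<subseteq> S \<and> length gs = wlen S w \<and> word_prod gs = w"
    unfolding wlen_def by (rule LeastI_ex)
  then show ?thesis
    unfolding reduced_expr_def by auto
qed

lemma word_prod_exchange:
  "set gs \<subseteq> S \<Longrightarrow> s \<in> S \<Longrightarrow> pos_root (- word_prod gs s) \<Longrightarrow>
   \<exists>hs. set hs \<subseteq> S \<and> Suc (length hs) = length gs \<and> word_prod hs = word_prod gs \<circ> refl s"
proof (induction gs)
  case Nil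
  then show ?case
    using pos_root_simple not_pos_root_uminus by auto
next
  case (Cons g gs)
  have g: "g \<in> S" and gs: "set gs \<subseteq> S"
    using Cons.prems by auto
  define y where "y = word_prod gs s"
  show ?case
  proof (cases "pos_root (- y)")
    case True
    then obtain hs where "set hs \<subseteq> S" "Suc (length hs) = length gs"
      "word_prod hs = word_prod gs \<circ> refl s"
      using Cons.IH gs Cons.prems(2) y_def by blast
    then show ?thesis
      using g by (intro exI[of _ "g # hs"]) (auto simp: comp_assoc)
  next
    case False
    have "y \<in> R"
      unfolding y_def using word_prod_root gs simple_roots Cons.prems(2) by blast
    then have "pos_root y"
      using False pos_root_or_uminus by blast
    \<comment> \<open>the only positive root that s_g makes negative is g itself\<close>
    have "y = g"
    proof (rule ccontr)
      assume "y \<noteq> g"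
      then have "pos_root (refl g y)"
        using pos_root_refl_simple g \<open>pos_root y\<close> by blast
      moreover have "pos_root (- refl g y)"
        using Cons.prems(3) y_def by simp
      ultimately show False
        using not_pos_root_uminus by blast
    qed
    then have "word_prod gs \<circ> refl s = refl g \<circ> word_prod gs"
      unfolding y_def
      by (auto simp: fun_eq_iff orthogonal_transformation_refl_commute[OF orthogonal_transformation_word_prod])
    then have "word_prod gs = word_prod (g # gs) \<circ> refl s"
      by (simp add: fun_eq_iff)
    then show ?thesis
      using gs by (metis length_Cons)
  qed
qed

lemma wlen_comp_refl_less:
  assumes w: "w \<in> weyl S" and s: "s \<in> S" and neg: "pos_root (- w s)"
  shows "wlen S (w \<circ> refl s) < wlen S w"
proof -
  obtain gs where gs: "reduced_expr S gs w"
    using reduced_expr_exists w by blast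
  then obtain hs where hs: "set hs \<subseteq> S" "Suc (length hs) = length gs" "word_prod hs = w \<circ> refl s"
    using word_prod_exchange[OF _ s] neg unfolding reduced_expr_def by blast
  then show ?thesis
    using wlen_le[OF hs(1)] gs unfolding reduced_expr_def by simp
qed

lemma wlen_less_comp_refl:
  assumes w: "w \<in> weyl S" and s: "s \<in> S" and pos: "pos_root (w s)"
  shows "wlen S w < wlen S (w \<circ> refl s)"
proof -
  have "(w \<circ> refl s) s = - w s"
    using simple_nonzero[OF s] linear_neg[OF linear_weyl[OF w]] by simp
  then have "wlen S (w \<circ> refl s \<circ> refl s) < wlen S (w \<circ> refl s)"
    using wlen_comp_refl_less[OF weyl_comp_refl[OF w s] s] pos by simp
  moreover have "w \<circ> refl s \<circ> refl s = w"
    by (simp add: fun_eq_iff)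
  ultimately show ?thesis
    by simp
qed

lemma reduced_expr_inversion_root_pos:
  assumes red: "reduced_expr S gs w" and k: "k < length gs"
  shows "pos_root (inversion_root gs k)"
proof (rule ccontr)
  assume not_pos: "\<not> ?thesis"
  have gs: "set gs \<subseteq> S" and len: "length gs = wlen S (word_prod gs)"
    using red unfolding reduced_expr_def by auto
  have gk: "gs ! k \<in> S"
    using gs k nth_mem by blast
  have take: "set (take k gs) \<subseteq> S" and drop: "set (drop (Suc k) gs) \<subseteq> S"
    using gs set_take_subset set_drop_subset by fast+
  have "inversion_root gs k \<in> R"
    unfolding inversion_root_def using word_prod_root[OF take] gk simple_roots by blast
  then have "pos_root (- word_prod (take k gs) (gs ! k))"
    using not_pos pos_root_or_uminus unfolding inversion_root_def by blast
  then obtain hs where hs: "set hs \<subseteq> S" "Suc (length hs) = length (take k gs)"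
    "word_prod hs = word_prod (take k gs) \<circ> refl (gs ! k)"
    using word_prod_exchange[OF take gk] by blast
  have "word_prod gs = word_prod (take k gs @ gs ! k # drop (Suc k) gs)"
    using id_take_nth_drop[OF k] by simp
  also have "\<dots> = word_prod (hs @ drop (Suc k) gs)"
    by (simp add: word_prod_append hs(3) comp_assoc)
  finally have "wlen S (word_prod gs) \<le> length (hs @ drop (Suc k) gs)"
    using wlen_le[of "hs @ drop (Suc k) gs"] hs(1) drop by simp
  then show False
    using hs(2) k len by simp
qed

lemma wlen_word_prod_rev_le:
  assumes "set gs \<subseteq> S"
  shows "wlen S (word_prod (rev gs)) \<le> wlen S (word_prod gs)"
proof -
  obtain hs where hs: "set hs \<subseteq> S" "word_prod hs = word_prod gs" "length hs = wlen S (word_prod gs)"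
    using reduced_expr_exists[of "word_prod gs"] assms mem_weyl_iff unfolding reduced_expr_def by blast
  have "word_prod (rev hs) = word_prod (rev gs)"
  proof
    fix x
    have "word_prod (rev hs) x = word_prod (rev hs) (word_prod hs (word_prod (rev gs) x))"
      by (simp add: hs(2))
    then show "word_prod (rev hs) x = word_prod (rev gs) x"
      by simp
  qed
  then show ?thesis
    using wlen_le[of "rev hs"] hs by simp
qed

lemma reduced_expr_rev:
  assumes "reduced_expr S gs w"
  shows "reduced_expr S (rev gs) (word_prod (rev gs))"
proof -
  have "set gs \<subseteq> S" "length gs = wlen S (word_prod gs)"
    using assms unfolding reduced_expr_def by auto
  then show ?thesis
    using wlen_word_prod_rev_le[of gs] wlen_word_prod_rev_le[of "rev gs"]
    unfolding reduced_expr_def by simp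
qed

lemma reduced_expr_inversion_root_image:
  assumes red: "reduced_expr S gs w" and k: "k < length gs"
  obtains y where "pos_root y" and "w y = - inversion_root gs k"
proof
  show "pos_root (inversion_root (rev gs) (length gs - Suc k))"
    using reduced_expr_inversion_root_pos[OF reduced_expr_rev[OF red]] k by simp
  have "gs ! k \<in> S"
    using red k nth_mem unfolding reduced_expr_def by blast
  then show "w (inversion_root (rev gs) (length gs - Suc k)) = - inversion_root gs k"
    using word_prod_inversion_root_rev[OF k] simple_nonzero red unfolding reduced_expr_def by blast
qed

section \<open>The longest element\<close>

lemma finite_weyl: "finite (weyl S)"
proof -
  \<comment> \<open>a linear map is determined by its values on the spanning set R, which it permutes\<close>
  have inj: "inj_on (\<lambda>w. restrict w R) (weyl S)"
  proof (rule inj_onI)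
    fix v w assume v: "v \<in> weyl S" and w: "w \<in> weyl S" and eq: "restrict v R = restrict w R"
    have "\<forall>x\<in>R. v x = w x"
      using eq by (metis restrict_apply')
    then have "v x = w x" for x
      using linear_eq_on_span[OF linear_weyl[OF v] linear_weyl[OF w], of R x] span_roots by auto
    then show "v = w" ..
  qed
  have "(\<lambda>w. restrict w R) ` weyl S \<subseteq> (\<Pi>\<^sub>E x\<in>R. R)"
  proof (rule image_subsetI)
    fix w assume "w \<in> weyl S"
    then show "restrict w R \<in> (\<Pi>\<^sub>E x\<in>R. R)"
      using weyl_root by (simp add: restrict_PiE_iff)
  qed
  moreover have "finite (\<Pi>\<^sub>E x\<in>R. R)"
    by (intro finite_PiE finite_roots)
  ultimately have "finite ((\<lambda>w. restrict w R) ` weyl S)"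
    using finite_subset by blast
  then show ?thesis
    using finite_imageD inj by blast
qed

lemma maximal_wlen_simple_neg:
  assumes w: "w \<in> weyl S" and max: "\<forall>v\<in>weyl S. wlen S v \<le> wlen S w" and s: "s \<in> S"
  shows "pos_root (- w s)"
proof (rule ccontr)
  assume "\<not> pos_root (- w s)"
  then have "pos_root (w s)"
    using pos_root_or_uminus weyl_root[OF w] s simple_roots by blast
  then have "wlen S w < wlen S (w \<circ> refl s)"
    using wlen_less_comp_refl w s by blast
  moreover have "wlen S (w \<circ> refl s) \<le> wlen S w"
    using max weyl_comp_refl w s by blast
  ultimately show False
    by simp
qed

lemma weyl_eq_id:
  assumes w: "w \<in> weyl S" and pos: "\<forall>s\<in>S. pos_root (w s)"
  shows "w = id"
proof -
  obtain gs where gs: "reduced_expr S gs w"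
    using reduced_expr_exists w by blast
  show ?thesis
  proof (cases gs rule: rev_exhaust)
    case Nil
    then show ?thesis
      using gs unfolding reduced_expr_def by simp
  next
    \<comment> \<open>a reduced word ending in s would make w s negative\<close>
    case (snoc hs s)
    have s: "s \<in> S" and hs: "set hs \<subseteq> S"
      using gs snoc unfolding reduced_expr_def by auto
    have "w = word_prod hs \<circ> refl s"
      using gs snoc unfolding reduced_expr_def by (simp add: word_prod_append)
    then have "w \<circ> refl s = word_prod hs"
      by (simp add: fun_eq_iff)
    then have "wlen S (w \<circ> refl s) < wlen S w"
      using wlen_le[OF hs] gs snoc unfolding reduced_expr_def by simp
    moreover have "wlen S w < wlen S (w \<circ> refl s)"
      using wlen_less_comp_refl w s pos by blast
    ultimately show ?thesis
      by simp
  qed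
qed

lemma weyl_eq_if_simple_neg:
  assumes v: "v \<in> weyl S" and w: "w \<in> weyl S"
    and v_neg: "\<forall>s\<in>S. pos_root (- v s)" and w_neg: "\<forall>s\<in>S. pos_root (- w s)"
  shows "v = w"
proof -
  obtain gs where gs: "set gs \<subseteq> S" "v = word_prod gs"
    using v mem_weyl_iff by blast
  define u where "u = word_prod (rev gs) \<circ> w"
  obtain hs where hs: "set hs \<subseteq> S" "w = word_prod hs"
    using w mem_weyl_iff by blast
  then have "u = word_prod (rev gs @ hs)" "set (rev gs @ hs) \<subseteq> S"
    using gs(1) unfolding u_def by (auto simp: word_prod_append)
  then have "u \<in> weyl S"
    using mem_weyl_iff by blast
  \<comment> \<open>u = v^-1 w keeps the simple roots positive, as v^-1 turns positive roots negative\<close>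
  moreover have "pos_root (u s)" if s: "s \<in> S" for s
  proof -
    have v_pos: "pos_root (- v x)" if "pos_root x" for x
      using pos_root_linear_image[of "\<lambda>x. - v x" x] linear_compose_neg[OF linear_weyl[OF v]]
        uminus_root weyl_root[OF v] that v_neg unfolding pos_root_def by auto
    define y where "y = word_prod (rev gs) (w s)"
    have "y \<in> R"
      unfolding y_def using word_prod_root weyl_root[OF w] gs(1) s simple_roots by auto
    moreover have "v (- y) = - w s"
      unfolding y_def gs(2) using linear_neg[OF linear_weyl[OF v]] gs(2) by simp
    then have "\<not> pos_root (- y)"
      using v_pos w_neg s not_pos_root_uminus by fastforce
    ultimately show ?thesis
      using pos_root_or_uminus unfolding u_def y_def by auto
  qed
  ultimately have "u = id"
    using weyl_eq_id by blast
  have "w x = v x" for x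
  proof -
    have "w x = word_prod gs (u x)"
      unfolding u_def by simp
    then show ?thesis
      using \<open>u = id\<close> gs(2) by simp
  qed
  then show ?thesis
    by auto
qed

lemma longest_weyl: "longest S \<in> weyl S"
proof -
  have "id \<in> weyl S"
    unfolding mem_weyl_iff by (intro exI[of _ "[]"]) simp
  then obtain w where w: "w \<in> weyl S" "wlen S w = Max (wlen S ` weyl S)"
    using Max_in[of "wlen S ` weyl S"] finite_weyl by fastforce
  then have max: "\<forall>v\<in>weyl S. wlen S v \<le> wlen S w"
    using finite_weyl by simp
  \<comment> \<open>longest S is a definite description, so the element of maximal length must be unique\<close>
  have "\<exists>!w. w \<in> weyl S \<and> (\<forall>v\<in>weyl S. wlen S v \<le> wlen S w)"
  proof (rule ex1I)
    show "w \<in> weyl S \<and> (\<forall>v\<in>weyl S. wlen S v \<le> wlen S w)"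
      using w max by blast
  next
    fix v assume "v \<in> weyl S \<and> (\<forall>u\<in>weyl S. wlen S u \<le> wlen S v)"
    then show "v = w"
      using weyl_eq_if_simple_neg[of v w] maximal_wlen_simple_neg w max by blast
  qed
  then show ?thesis
    unfolding longest_def by (rule theI'[THEN conjunct1])
qed

section \<open>Coroots paired with weights\<close>

definition height :: "'a \<Rightarrow> real" where
  "height x = (\<Sum>s\<in>S. simple_coeff x s)"

lemma height_refl_simple:
  assumes "s \<in> S"
  shows "height (refl s x) = height x - copair s x"
proof -
  have "height (refl s x) = (\<Sum>t\<in>S. simple_coeff x t - (if t = s then copair s x else 0))"
    unfolding height_def refl_eq_copair
    by (rule sum.cong) (simp_all add: simple_coeff_diff simple_coeff_scaleR simple_coeff_simple assms)
  also have "\<dots> = height x - copair s x"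
    unfolding height_def using assms finite_simple by (simp add: sum_subtractf)
  finally show ?thesis .
qed

lemma height_nonneg: "pos_root x \<Longrightarrow> height x \<ge> 0"
  unfolding pos_root_def height_def by (simp add: sum_nonneg)

lemma exists_simple_copair_pos:
  assumes x: "pos_root x"
  shows "\<exists>s\<in>S. copair s x > 0"
proof (rule ccontr)
  assume "\<not> ?thesis"
  then have "s \<bullet> x \<le> 0" if "s \<in> S" for s
    using that simple_nonzero[OF that] unfolding copair_def by (auto simp: zero_less_divide_iff)
  then have "x \<bullet> x \<le> 0"
    using x unfolding inner_simple_expansion[of x x] pos_root_def
    by (auto intro: sum_nonpos mult_nonneg_nonpos)
  moreover have "x \<noteq> 0"
    using x root_nonzero unfolding pos_root_def by blast
  ultimately show False
    using inner_gt_zero_iff[of x] by linarith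
qed

lemma copair_pos_root_Ints:
  assumes weight: "\<forall>s\<in>S. copair s v \<in> \<int>" and "pos_root x"
  shows "copair x v \<in> \<int>"
  using assms(2)
proof (induction "nat \<lfloor>height x\<rfloor>" arbitrary: x rule: less_induct)
  case less
  show ?case
  proof (cases "x \<in> S")
    case True
    then show ?thesis
      using weight by blast
  next
    case False
    obtain s where s: "s \<in> S" "copair s x > 0"
      using exists_simple_copair_pos less.prems by blast
    have x: "x \<in> R" and s_root: "s \<in> R"
      using less.prems s simple_roots unfolding pos_root_def by auto
    define y where "y = refl s x"
    have y: "pos_root y"
      unfolding y_def using pos_root_refl_simple s(1) less.prems False by blast
    have "copair s x \<ge> 1"
      using copair_root_Ints[OF s_root x] s(2) Ints_nonzero_abs_ge1 by fastforce
    then have "height y \<le> height x - 1"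
      unfolding y_def using height_refl_simple[OF s(1)] by simp
    then have "nat \<lfloor>height y\<rfloor> < nat \<lfloor>height x\<rfloor>"
      using floor_mono[of "height y" "height x - 1"] height_nonneg[OF y] by simp
    then have "copair y v \<in> \<int>"
      using less.hyps y by blast
    moreover have "copair x v = copair y v - copair s v * copair y s"
      using copair_refl[of s y v] unfolding y_def by simp
    ultimately show ?thesis
      using weight s(1) copair_root_Ints[of y s] y s_root unfolding pos_root_def by auto
  qed
qed

lemma fund_weight_copair_ge_one:
  assumes d: "d \<in> S" and fw: "fund_weight S d v" and x: "pos_root x" and coeff: "simple_coeff x d > 0"
  shows "copair x v \<ge> 1"
proof -
  have "s \<bullet> v = (if s = d then (d \<bullet> d) / 2 else 0)" if "s \<in> S" for s
    using fw that simple_nonzero unfolding fund_weight_def copair_def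
    by (auto simp: field_simps split: if_splits)
  then have "x \<bullet> v = (\<Sum>s\<in>S. if s = d then simple_coeff x d * ((d \<bullet> d) / 2) else 0)"
    unfolding inner_simple_expansion[of x v] by (auto intro: sum.cong)
  also have "\<dots> = simple_coeff x d * ((d \<bullet> d) / 2)"
    using d finite_simple by simp
  also have "\<dots> > 0"
    using coeff simple_nonzero[OF d] by simp
  finally have "copair x v > 0"
    unfolding copair_def using x root_nonzero unfolding pos_root_def by simp
  moreover have "copair x v \<in> \<int>"
    using copair_pos_root_Ints fw x unfolding fund_weight_def by simp
  ultimately show ?thesis
    using Ints_nonzero_abs_ge1 by fastforce
qed

lemma minuscule_copair_nonneg:
  assumes minuscule: "minuscule R S v" and y: "pos_root y" and z: "pos_root z"
    and y_ge: "copair y v \<ge> 1" and z_ge: "copair z v \<ge> 1"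
  shows "copair y z \<ge> 0"
proof (rule ccontr)
  assume "\<not> ?thesis"
  then have neg: "copair y z < 0"
    by simp
  have y_root: "y \<in> R" and z_root: "z \<in> R"
    using y z unfolding pos_root_def by auto
  \<comment> \<open>s_y z is a positive root pairing to at least 2 with v\<close>
  have "pos_root (refl y z)"
  proof -
    have "simple_coeff (refl y z) t \<ge> 0" if "t \<in> S" for t
    proof -
      have "copair y z * simple_coeff y t \<le> 0" "simple_coeff z t \<ge> 0"
        using y z that neg unfolding pos_root_def by (auto intro: mult_nonpos_nonneg)
      then show ?thesis
        unfolding refl_eq_copair by (simp add: simple_coeff_diff simple_coeff_scaleR)
    qed
    then show ?thesis
      using refl_root[OF y_root z_root] unfolding pos_root_def by blast
  qed
  then have "copair (refl y z) v \<le> 1"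
    using minuscule pos_roots_eq unfolding minuscule_def by blast
  moreover have "copair z y < 0"
    using neg inner_ge_zero[of y] unfolding copair_def
    by (auto simp: inner_commute divide_less_0_iff)
  then have "copair z y \<le> -1"
    using copair_root_Ints[OF z_root y_root] Ints_nonzero_abs_ge1 by fastforce
  then have "copair y v * copair z y \<le> - 1"
    using y_ge by (smt (verit) mult_le_cancel_left1 mult_minus_right)
  ultimately show False
    using copair_refl[of y z v] z_ge by simp
qed

section \<open>Minimal coset representatives\<close>

lemma coset_minimal_simple_pos:
  assumes phi: "phi \<in> weyl S" and min: "\<forall>u\<in>weyl (S - {d}). wlen S phi \<le> wlen S (phi \<circ> u)"
    and s: "s \<in> S" "s \<noteq> d"
  shows "pos_root (phi s)"
proof (rule ccontr)
  assume "\<not> pos_root (phi s)"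
  then have "wlen S (phi \<circ> refl s) < wlen S phi"
    using pos_root_or_uminus weyl_root[OF phi] s simple_roots wlen_comp_refl_less phi by blast
  moreover have "refl s \<in> weyl (S - {d})"
    unfolding weyl_def using s by (intro image_eqI[of _ _ "[s]"]) auto
  ultimately show False
    using min by fastforce
qed

lemma coset_minimal_inversion_coeff_pos:
  assumes phi: "phi \<in> weyl S" and min: "\<forall>u\<in>weyl (S - {d}). wlen S phi \<le> wlen S (phi \<circ> u)"
    and d: "d \<in> S" and x: "pos_root x" and neg: "pos_root (- phi x)"
  shows "simple_coeff x d > 0"
proof (rule ccontr)
  assume "\<not> ?thesis"
  then have "simple_coeff x d = 0"
    using x d unfolding pos_root_def by force
  then have "pos_root (phi x)"
    using pos_root_linear_image[OF linear_weyl[OF phi] _ x] weyl_root[OF phi] x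
      coset_minimal_simple_pos[OF phi min] unfolding pos_root_def by metis
  then show False
    using neg not_pos_root_uminus by blast
qed

end

theorem mainTheorem3:
  fixes R S :: "'a::euclidean_space set" and d varpi :: 'a
    and phi :: "'a \<Rightarrow> 'a" and gam :: "'a list"
  assumes "root_system R" and "is_base R S"
    and "d \<in> S" and "fund_weight S d varpi" and "minuscule R S varpi"
    and "phi \<in> weyl S"
    and "\<forall>u\<in>weyl (S - {d}). wlen S phi \<le> wlen S (phi \<circ> u)"
    and "reduced_expr S gam phi"
  defines "bet \<equiv> map (weyl_inv S) gam"
  defines "alph \<equiv> (\<lambda>k. word_prod (take k bet) (bet ! k))"
  shows "\<forall>i < length gam. \<forall>j < length gam. copair (alph i) (alph j) \<ge> 0"
proof (intro allI impI)
  interpret based_root_system R S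
    using assms(1,2) by unfold_locales
  have alph: "alph k = - longest S (inversion_root gam k)" if "k < length gam" for k
    using inversion_root_map_orthogonal[OF orthogonal_transformation_weyl[OF longest_weyl] that]
    unfolding alph_def bet_def weyl_inv_def inversion_root_def by simp
  have ge_one: "copair y varpi \<ge> 1" if "pos_root y" "phi y = - inversion_root gam k" "k < length gam" for y k
    using that reduced_expr_inversion_root_pos[OF assms(8)] coset_minimal_inversion_coeff_pos[OF assms(6,7,3)]
      fund_weight_copair_ge_one[OF assms(3,4)] by simp
  fix i j assume i: "i < length gam" and j: "j < length gam"
  obtain y z where y: "pos_root y" "phi y = - inversion_root gam i"
    and z: "pos_root z" "phi z = - inversion_root gam j"
    using reduced_expr_inversion_root_image[OF assms(8)] i j by metis
  have "copair (alph i) (alph j) = copair (inversion_root gam i) (inversion_root gam j)"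
    using alph i j copair_uminus_orthogonal_transformation[OF orthogonal_transformation_weyl[OF longest_weyl]]
    by simp
  also have "\<dots> = copair (- phi y) (- phi z)"
    using y(2) z(2) by simp
  also have "\<dots> = copair y z"
    using copair_uminus_orthogonal_transformation[OF orthogonal_transformation_weyl[OF assms(6)]] .
  finally show "copair (alph i) (alph j) \<ge> 0"
    using minuscule_copair_nonneg[OF assms(5) y(1) z(1)] ge_one y z i j by simp
qed

end
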